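(* Consider the vector nonlinear Riemann–Hilbert problem on the real line $$\phi_i^+(\lambda)=\mathcal R_i(\phi_1^-(\lambda),\phi_2^-(\lambda),\lambda),\quad i=1,2,\ \lambda\in\mathbb R,$$ where $\mathcal R_i(\zeta_1,\zeta_2,\lambda)=\zeta_i+R_i(\zeta_1,\zeta_2,\lambda)$ for given spectral data $R_1,R_2$ (defined for $(\zeta_1,\zeta_2)\in\mathbb C^2$, $\lambda\in\mathbb R$, independent of $x,y,z,t$), and where $\phi_i^{+}$ (resp. $\phi_i^-$) are analytic in $\lambda$ in the upper (resp. lower) half-plane and depend on parameters $(x,y,z,t)$, with normalization $$\phi_1^{\pm}(\lambda)=-y+O(\lambda^{-1}),\qquad \phi_2^{\pm}(\lambda)=x+\lambda t+O(\lambda^{-1}),\qquad |\lambda|\gg1.$$ Assume this Riemann–Hilbert problem and its linearization $\vec\sigma^+=\mathcal J\vec\sigma^-$ (where $\mathcal J$ is the Jacobian matrix $\mathcal J_{ij}=\partial\mathcal R_i/\partial\zeta_j$ evaluated at $\vec\phi^-$) are uniquely solvable. Define $u$ by $$u_x=\lim_{\lambda\to\infty}\lambda(\phi_1^{\pm}+y),\qquad u_y=\lim_{\lambda\to\infty}\lambda(\phi_2^{\pm}-x-\lambda t).$$ Then $\vec\phi^{\pm}=(\phi_1^\pm,\phi_2^\pm)$ are common eigenfunctions of the vector fields $$T=\partial_t+(u_{xy}-\lambda)\partial_x-u_{xx}\partial_y,\qquad Z=\lambda\partial_z-u_{yz}\partial_x+u_{zx}\partial_y,$$ i.e. $T\phi_i^\pm=Z\phi_i^\pm=0$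 for $i=1,2$.
   Context: The vector fields $T,Z$ form the Lax pair of the Doubrov–Ferapontov modified heavenly equation $u_{zt}+u_{zx}u_{xy}-u_{yz}u_{xx}=0$. Subscripts denote partial derivatives. *)

theory Defs
  imports "HOL-Complex_Analysis.Complex_Analysis" "HOL-Library.Landau_Symbols"
begin

text \<open>Parameters are (x,y,z,t), indexed k = 0,1,2,3 respectively.\<close>

definition coord :: "nat \<Rightarrow> real \<Rightarrow> real \<Rightarrow> real \<Rightarrow> real \<Rightarrow> real" where
  "coord k x y z t = (if k = 0 then x else if k = 1 then y else if k = 2 then z else t)"

definition along :: "nat \<Rightarrow> (real \<Rightarrow> real \<Rightarrow> real \<Rightarrow> real \<Rightarrow> 'a) \<Rightarrow>
    real \<Rightarrow> real \<Rightarrow> real \<Rightarrow> real \<Rightarrow> real \<Rightarrow> 'a" where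
  "along k f x y z t s = (if k = 0 then f s y z t else if k = 1 then f x s z t
                          else if k = 2 then f x y s t else f x y z s)"

definition pd :: "nat \<Rightarrow> (real \<Rightarrow> real \<Rightarrow> real \<Rightarrow> real \<Rightarrow> 'a::real_normed_vector) \<Rightarrow>
    real \<Rightarrow> real \<Rightarrow> real \<Rightarrow> real \<Rightarrow> 'a" where
  "pd k f x y z t = vector_derivative (along k f x y z t) (at (coord k x y z t))"

definition UHP :: "complex set" where "UHP = {l. Im l \<ge> 0}"
definition LHP :: "complex set" where "LHP = {l. Im l \<le> 0}"
definition UHPo :: "complex set" where "UHPo = {l. Im l > 0}"
definition LHPo :: "complex set" where "LHPo = {l. Im l < 0}"

definition at_inf_in :: "complex set \<Rightarrow> complex filter" where
  "at_inf_in S = inf at_infinity (principal S)"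

definition calR :: "(nat \<Rightarrow> complex \<Rightarrow> complex \<Rightarrow> real \<Rightarrow> complex) \<Rightarrow>
    nat \<Rightarrow> complex \<Rightarrow> complex \<Rightarrow> real \<Rightarrow> complex" where
  "calR R i z1 z2 l = (if i = 1 then z1 else z2) + R i z1 z2 l"

definition Jac :: "(nat \<Rightarrow> complex \<Rightarrow> complex \<Rightarrow> real \<Rightarrow> complex) \<Rightarrow> real \<Rightarrow>
    complex \<Rightarrow> complex \<Rightarrow> nat \<Rightarrow> nat \<Rightarrow> complex" where
  "Jac R l z1 z2 i j = (if j = 1 then deriv (\<lambda>s. calR R i s z2 l) z1
                        else deriv (\<lambda>s. calR R i z1 s l) z2)"

definition rh_solution :: "(nat \<Rightarrow> complex \<Rightarrow> complex \<Rightarrow> real \<Rightarrow> complex) \<Rightarrow>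
    real \<Rightarrow> real \<Rightarrow> real \<Rightarrow> (nat \<Rightarrow> complex \<Rightarrow> complex) \<Rightarrow> (nat \<Rightarrow> complex \<Rightarrow> complex) \<Rightarrow> bool" where
  "rh_solution R x y t P M \<longleftrightarrow>
     (\<forall>i\<in>{1,2}. P i holomorphic_on UHPo \<and> continuous_on UHP (P i)
              \<and> M i holomorphic_on LHPo \<and> continuous_on LHP (M i)) \<and>
     (\<forall>i\<in>{1,2}. \<forall>l::real. P i (complex_of_real l) =
         calR R i (M 1 (complex_of_real l)) (M 2 (complex_of_real l)) l) \<and>
     (\<lambda>l. P 1 l + complex_of_real y) \<in> O[at_inf_in UHP](\<lambda>l. 1 / l) \<and>
     (\<lambda>l. M 1 l + complex_of_real y) \<in> O[at_inf_in LHP](\<lambda>l. 1 / l) \<and>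
     (\<lambda>l. P 2 l - complex_of_real x - l * complex_of_real t) \<in> O[at_inf_in UHP](\<lambda>l. 1 / l) \<and>
     (\<lambda>l. M 2 l - complex_of_real x - l * complex_of_real t) \<in> O[at_inf_in LHP](\<lambda>l. 1 / l)"

definition lead :: "nat \<Rightarrow> real \<Rightarrow> real \<Rightarrow> real \<Rightarrow> real \<Rightarrow> complex \<Rightarrow> complex" where
  "lead i x y z t l = (if i = 1 then - complex_of_real y
                       else complex_of_real x + l * complex_of_real t)"

definition Tfield :: "(real \<Rightarrow> real \<Rightarrow> real \<Rightarrow> real \<Rightarrow> complex) \<Rightarrow> complex \<Rightarrow>
    (real \<Rightarrow> real \<Rightarrow> real \<Rightarrow> real \<Rightarrow> complex) \<Rightarrow> real \<Rightarrow> real \<Rightarrow> real \<Rightarrow> real \<Rightarrow> complex" where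
  "Tfield u l f x y z t =
     pd 3 f x y z t + (pd 0 (pd 1 u) x y z t - l) * pd 0 f x y z t
       - pd 0 (pd 0 u) x y z t * pd 1 f x y z t"

definition Zfield :: "(real \<Rightarrow> real \<Rightarrow> real \<Rightarrow> real \<Rightarrow> complex) \<Rightarrow> complex \<Rightarrow>
    (real \<Rightarrow> real \<Rightarrow> real \<Rightarrow> real \<Rightarrow> complex) \<Rightarrow> real \<Rightarrow> real \<Rightarrow> real \<Rightarrow> real \<Rightarrow> complex" where
  "Zfield u l f x y z t =
     l * pd 2 f x y z t - pd 2 (pd 1 u) x y z t * pd 0 f x y z t
       + pd 2 (pd 0 u) x y z t * pd 1 f x y z t"

end

theory Submission
  imports Defs
begin

text \<open>Both T and Z have the form \<open>\<Sum>\<^sub>k (a\<^sub>k + \<lambda> b\<^sub>k) \<partial>\<^sub>k\<close>. For such a field V, the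
  functions \<open>V\<phi>\<^sup>\<plusminus>\<close> are again analytic in the half-planes, and differentiating the jump
  condition \<open>\<phi>\<^sup>+ = \<R>(\<phi>\<^sup>-)\<close> by the chain rule shows that \<open>(V\<phi>\<^sup>+, V\<phi>\<^sup>-)\<close> satisfies the
  linearised jump condition \<open>\<sigma>\<^sup>+ = \<J>\<sigma>\<^sup>-\<close>. Since \<open>\<lambda> \<partial>\<^sub>k(\<phi>\<^sub>i - lead\<^sub>i)\<close> tends to \<open>\<partial>\<^sub>k u\<^sub>i\<close>
  (with \<open>u\<^sub>1 = u\<^sub>x\<close>, \<open>u\<^sub>2 = u\<^sub>y\<close>), the limit of \<open>V\<phi>\<^sub>i\<close> at infinity is the constant
  \<open>V lead\<^sub>i + \<Sum>\<^sub>k b\<^sub>k \<partial>\<^sub>k u\<^sub>i\<close>, which for T and Z vanishes precisely because of how u is read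
  off from the asymptotics. So \<open>(V\<phi>\<^sup>+, V\<phi>\<^sup>-)\<close> is a decaying solution of the linearised
  problem, hence zero.\<close>

lemma along_coord [simp]: "along k f x y z t (coord k x y z t) = f x y z t"
  by (simp add: along_def coord_def)

lemma pd_diff:
  assumes "along k f x y z t differentiable at (coord k x y z t)"
    and "along k g x y z t differentiable at (coord k x y z t)"
  shows "pd k (\<lambda>x y z t. f x y z t - g x y z t) x y z t = pd k f x y z t - pd k g x y z t"
proof -
  have "along k (\<lambda>x y z t. f x y z t - g x y z t) x y z t
      = (\<lambda>s. along k f x y z t s - along k g x y z t s)"
    by (auto simp: along_def)
  then show ?thesis
    unfolding pd_def using assms by simp
qed

lemma has_vector_derivative_compose2:
  fixes F :: "complex \<Rightarrow> complex \<Rightarrow> complex"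
  assumes "(m1 has_vector_derivative d1) (at c)" and "(m2 has_vector_derivative d2) (at c)"
    and "((\<lambda>w. F (fst w) (snd w)) has_derivative (\<lambda>h. J1 * fst h + J2 * snd h)) (at (m1 c, m2 c))"
  shows "((\<lambda>s. F (m1 s) (m2 s)) has_vector_derivative J1 * d1 + J2 * d2) (at c)"
proof -
  have "((\<lambda>s. (m1 s, m2 s)) has_derivative (\<lambda>h. (h *\<^sub>R d1, h *\<^sub>R d2))) (at c)"
    using assms(1,2) unfolding has_vector_derivative_def by (rule has_derivative_Pair)
  from has_derivative_compose[OF this assms(3)]
  have "((\<lambda>s. F (m1 s) (m2 s)) has_derivative (\<lambda>h. J1 * (h *\<^sub>R d1) + J2 * (h *\<^sub>R d2))) (at c)"
    by simp
  moreover have "(\<lambda>h. J1 * (h *\<^sub>R d1) + J2 * (h *\<^sub>R d2)) = (\<lambda>h. h *\<^sub>R (J1 * d1 + J2 * d2))"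
    by (auto simp: scaleR_conv_of_real algebra_simps)
  ultimately show ?thesis
    unfolding has_vector_derivative_def by simp
qed

lemma pd_compose2:
  fixes F :: "complex \<Rightarrow> complex \<Rightarrow> complex"
  assumes "((\<lambda>w. F (fst w) (snd w)) has_derivative (\<lambda>h. J1 * fst h + J2 * snd h))
      (at (M1 x y z t, M2 x y z t))"
    and "along k M1 x y z t differentiable at (coord k x y z t)"
    and "along k M2 x y z t differentiable at (coord k x y z t)"
  shows "pd k (\<lambda>x y z t. F (M1 x y z t) (M2 x y z t)) x y z t
      = J1 * pd k M1 x y z t + J2 * pd k M2 x y z t"
proof -
  have "along k (\<lambda>x y z t. F (M1 x y z t) (M2 x y z t)) x y z t
      = (\<lambda>s. F (along k M1 x y z t s) (along k M2 x y z t s))"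
    by (auto simp: along_def)
  moreover have "((\<lambda>s. F (along k M1 x y z t s) (along k M2 x y z t s)) has_vector_derivative
      J1 * pd k M1 x y z t + J2 * pd k M2 x y z t) (at (coord k x y z t))"
    unfolding pd_def using assms
    by (intro has_vector_derivative_compose2) (simp_all add: vector_derivative_works)
  ultimately show ?thesis
    by (simp add: pd_def vector_derivative_at)
qed

definition affine_field :: "(nat \<Rightarrow> complex) \<Rightarrow> (nat \<Rightarrow> complex) \<Rightarrow> complex \<Rightarrow>
    (real \<Rightarrow> real \<Rightarrow> real \<Rightarrow> real \<Rightarrow> complex) \<Rightarrow> real \<Rightarrow> real \<Rightarrow> real \<Rightarrow> real \<Rightarrow> complex" where
  "affine_field a b l f x y z t = (\<Sum>k<4. (a k + l * b k) * pd k f x y z t)"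

lemma affine_field_expand:
  "affine_field a b l f x y z t = (a 0 + l * b 0) * pd 0 f x y z t + (a 1 + l * b 1) * pd 1 f x y z t
     + (a 2 + l * b 2) * pd 2 f x y z t + (a 3 + l * b 3) * pd 3 f x y z t"
  by (simp add: affine_field_def eval_nat_numeral)

lemma affine_field_compose2:
  fixes F :: "complex \<Rightarrow> complex \<Rightarrow> complex"
  assumes "((\<lambda>w. F (fst w) (snd w)) has_derivative (\<lambda>h. J1 * fst h + J2 * snd h))
      (at (M1 x y z t, M2 x y z t))"
    and "\<forall>k<4. along k M1 x y z t differentiable at (coord k x y z t)"
    and "\<forall>k<4. along k M2 x y z t differentiable at (coord k x y z t)"
  shows "affine_field a b l (\<lambda>x y z t. F (M1 x y z t) (M2 x y z t)) x y z t
      = J1 * affine_field a b l M1 x y z t + J2 * affine_field a b l M2 x y z t"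
  unfolding affine_field_def sum_distrib_left sum.distrib[symmetric]
  using assms by (intro sum.cong) (simp_all add: pd_compose2 algebra_simps)

lemma holomorphic_on_affine_field:
  assumes "\<forall>k<4. (\<lambda>l. pd k (f l) x y z t) holomorphic_on S"
  shows "(\<lambda>l. affine_field a b l (f l) x y z t) holomorphic_on S"
  unfolding affine_field_def using assms by (intro holomorphic_intros) auto

lemma continuous_on_affine_field:
  assumes "\<forall>k<4. continuous_on S (\<lambda>l. pd k (f l) x y z t)"
  shows "continuous_on S (\<lambda>l. affine_field a b l (f l) x y z t)"
  unfolding affine_field_def using assms by (intro continuous_intros) auto

lemma tendsto_0_if_mult_tendsto:
  fixes e :: "'a::real_normed_field \<Rightarrow> 'a"
  assumes "F \<le> at_infinity" and "((\<lambda>l. l * e l) \<longlongrightarrow> L) F"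
  shows "(e \<longlongrightarrow> 0) F"
proof -
  have "((\<lambda>l. inverse l * (l * e l)) \<longlongrightarrow> 0 * L) F"
    using tendsto_mono[OF assms(1) tendsto_inverse_0] assms(2) by (rule tendsto_mult)
  moreover have "eventually (\<lambda>l. inverse l * (l * e l) = e l) F"
    using filter_leD[OF assms(1) eventually_not_equal_at_infinity[of 0]] by eventually_elim simp
  ultimately show ?thesis
    by (simp add: tendsto_cong)
qed

lemma has_vector_derivative_along_lead:
  assumes "i \<in> {1, 2}" and "k < 4"
  shows "(along k (\<lambda>x y z t. lead i x y z t l) x y z t has_vector_derivative
      (if i = 1 then (if k = 1 then -1 else 0) else if k = 0 then 1 else if k = 3 then l else 0))
      (at (coord k x y z t))"
proof -
  have "k = 0 \<or> k = 1 \<or> k = 2 \<or> k = 3" and "i = 1 \<or> i = 2"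
    using assms by auto
  then show ?thesis
    by (elim disjE)
      (auto simp: along_def[abs_def] lead_def coord_def intro!: derivative_eq_intros)
qed

lemma affine_field_lead:
  assumes "i \<in> {1, 2}"
  shows "affine_field a b l (\<lambda>x y z t. lead i x y z t l) x y z t
      = (if i = 1 then - (a 1 + l * b 1) else (a 0 + l * b 0) + l * (a 3 + l * b 3))"
proof -
  have "pd k (\<lambda>x y z t. lead i x y z t l) x y z t
      = (if i = 1 then (if k = 1 then -1 else 0) else if k = 0 then 1 else if k = 3 then l else 0)"
    if "k < 4" for k
    using has_vector_derivative_along_lead[OF assms that] unfolding pd_def
    by (rule vector_derivative_at)
  then show ?thesis
    using assms by (auto simp: affine_field_expand)
qed

lemma affine_field_tendsto_0:
  assumes i: "i \<in> {1, 2}"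
    and diff: "\<forall>k<4. \<forall>l\<in>S.
      along k (\<lambda>x y z t. phi x y z t l) x y z t differentiable at (coord k x y z t)"
    and asymp: "\<forall>k<4.
      ((\<lambda>l. l * pd k (\<lambda>x y z t. phi x y z t l - lead i x y z t l) x y z t) \<longlongrightarrow> L k) (at_inf_in S)"
    and cancel: "\<forall>l. affine_field a b l (\<lambda>x y z t. lead i x y z t l) x y z t + (\<Sum>k<4. b k * L k) = 0"
  shows "((\<lambda>l. affine_field a b l (\<lambda>x y z t. phi x y z t l) x y z t) \<longlongrightarrow> 0) (at_inf_in S)"
proof -
  define e where "e k l = pd k (\<lambda>x y z t. phi x y z t l - lead i x y z t l) x y z t" for k l
  have F: "at_inf_in S \<le> at_infinity"
    by (simp add: at_inf_in_def)
  have "((\<lambda>l. a k * e k l + b k * (l * e k l)) \<longlongrightarrow> a k * 0 + b k * L k) (at_inf_in S)"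
    if "k < 4" for k
    using that asymp tendsto_0_if_mult_tendsto[OF F]
    unfolding e_def by (intro tendsto_intros) auto
  then have "((\<lambda>l. \<Sum>k<4. (a k + l * b k) * e k l) \<longlongrightarrow> (\<Sum>k<4. b k * L k)) (at_inf_in S)"
    by (auto intro!: tendsto_sum simp: algebra_simps)
  then have "((\<lambda>l. - (\<Sum>k<4. b k * L k) + (\<Sum>k<4. (a k + l * b k) * e k l))
      \<longlongrightarrow> - (\<Sum>k<4. b k * L k) + (\<Sum>k<4. b k * L k)) (at_inf_in S)"
    by (rule tendsto_add[OF tendsto_const])
  moreover have "eventually (\<lambda>l. - (\<Sum>k<4. b k * L k) + (\<Sum>k<4. (a k + l * b k) * e k l)
      = affine_field a b l (\<lambda>x y z t. phi x y z t l) x y z t) (at_inf_in S)"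
  proof -
    have e_eq: "e k l = pd k (\<lambda>x y z t. phi x y z t l) x y z t - pd k (\<lambda>x y z t. lead i x y z t l) x y z t"
      if "k < 4" and "l \<in> S" for k l
      unfolding e_def using that diff
      by (intro pd_diff differentiableI_vector[OF has_vector_derivative_along_lead[OF i]]) auto
    have "affine_field a b l (\<lambda>x y z t. phi x y z t l) x y z t
        = affine_field a b l (\<lambda>x y z t. lead i x y z t l) x y z t + (\<Sum>k<4. (a k + l * b k) * e k l)"
      if "l \<in> S" for l
      using that by (auto simp: affine_field_def e_eq sum.distrib[symmetric] algebra_simps intro!: sum.cong)
    moreover have "eventually (\<lambda>l. l \<in> S) (at_inf_in S)"
      by (simp add: at_inf_in_def eventually_inf_principal)
    moreover have "affine_field a b l (\<lambda>x y z t. lead i x y z t l) x y z t = - (\<Sum>k<4. b k * L k)" for l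
      using cancel by (simp add: eq_neg_iff_add_eq_0)
    ultimately show ?thesis
      by (auto elim!: eventually_mono)
  qed
  ultimately show ?thesis
    by (simp add: tendsto_cong)
qed

lemma affine_field_jump:
  assumes R_holo: "\<forall>i\<in>{1,2}. \<forall>l z1 z2.
      ((\<lambda>w::complex \<times> complex. calR R i (fst w) (snd w) l) has_derivative
        (\<lambda>h. Jac R l z1 z2 i 1 * fst h + Jac R l z1 z2 i 2 * snd h)) (at (z1, z2))"
    and sol: "\<forall>x y z t. rh_solution R x y t (\<lambda>i. phiP i x y z t) (\<lambda>i. phiM i x y z t)"
    and diff: "\<forall>i\<in>{1,2}. \<forall>k<4.
      along k (\<lambda>x y z t. phiM i x y z t (complex_of_real r)) x y z t differentiable (at (coord k x y z t))"
    and j: "j \<in> {1, 2}"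
  shows "affine_field a b r (\<lambda>x y z t. phiP j x y z t r) x y z t
      = Jac R r (phiM 1 x y z t r) (phiM 2 x y z t r) j 1 * affine_field a b r (\<lambda>x y z t. phiM 1 x y z t r) x y z t
      + Jac R r (phiM 1 x y z t r) (phiM 2 x y z t r) j 2 * affine_field a b r (\<lambda>x y z t. phiM 2 x y z t r) x y z t"
proof -
  have "(\<lambda>x y z t. phiP j x y z t r) = (\<lambda>x y z t. calR R j (phiM 1 x y z t r) (phiM 2 x y z t r) r)"
    using sol j by (auto simp: rh_solution_def)
  moreover have "affine_field a b r (\<lambda>x y z t. calR R j (phiM 1 x y z t r) (phiM 2 x y z t r) r) x y z t
      = Jac R r (phiM 1 x y z t r) (phiM 2 x y z t r) j 1 * affine_field a b r (\<lambda>x y z t. phiM 1 x y z t r) x y z t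
      + Jac R r (phiM 1 x y z t r) (phiM 2 x y z t r) j 2 * affine_field a b r (\<lambda>x y z t. phiM 2 x y z t r) x y z t"
    by (rule affine_field_compose2[where F = "\<lambda>z1 z2. calR R j z1 z2 r"]) (use R_holo diff j in auto)
  ultimately show ?thesis
    by simp
qed

lemma affine_field_vanishes:
  assumes R_holo: "\<forall>i\<in>{1,2}. \<forall>l z1 z2.
      ((\<lambda>w::complex \<times> complex. calR R i (fst w) (snd w) l) has_derivative
        (\<lambda>h. Jac R l z1 z2 i 1 * fst h + Jac R l z1 z2 i 2 * snd h)) (at (z1, z2))"
    and sol: "\<forall>x y z t. rh_solution R x y t (\<lambda>i. phiP i x y z t) (\<lambda>i. phiM i x y z t)"
    and lin_uniq: "\<forall>x y z t. \<forall>sP sM :: nat \<Rightarrow> complex \<Rightarrow> complex.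
      (\<forall>i\<in>{1,2}. sP i holomorphic_on UHPo \<and> continuous_on UHP (sP i)
               \<and> (sP i \<longlongrightarrow> 0) (at_inf_in UHP)
               \<and> sM i holomorphic_on LHPo \<and> continuous_on LHP (sM i)
               \<and> (sM i \<longlongrightarrow> 0) (at_inf_in LHP)) \<and>
      (\<forall>i\<in>{1,2}. \<forall>l::real.
         sP i (complex_of_real l) =
           Jac R l (phiM 1 x y z t l) (phiM 2 x y z t l) i 1 * sM 1 (complex_of_real l)
         + Jac R l (phiM 1 x y z t l) (phiM 2 x y z t l) i 2 * sM 2 (complex_of_real l))
      \<longrightarrow> (\<forall>i\<in>{1,2}. (\<forall>l\<in>UHP. sP i l = 0) \<and> (\<forall>l\<in>LHP. sM i l = 0))"
    and phi_diff: "\<forall>i\<in>{1,2}. \<forall>k<4. \<forall>x y z t.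
      (\<forall>l\<in>UHP. along k (\<lambda>x y z t. phiP i x y z t l) x y z t differentiable (at (coord k x y z t))) \<and>
      (\<forall>l\<in>LHP. along k (\<lambda>x y z t. phiM i x y z t l) x y z t differentiable (at (coord k x y z t)))"
    and phi_deriv_holo: "\<forall>i\<in>{1,2}. \<forall>k<4. \<forall>x y z t.
      (\<lambda>l. pd k (\<lambda>x y z t. phiP i x y z t l) x y z t) holomorphic_on UHPo \<and>
      continuous_on UHP (\<lambda>l. pd k (\<lambda>x y z t. phiP i x y z t l) x y z t) \<and>
      (\<lambda>l. pd k (\<lambda>x y z t. phiM i x y z t l) x y z t) holomorphic_on LHPo \<and>
      continuous_on LHP (\<lambda>l. pd k (\<lambda>x y z t. phiM i x y z t l) x y z t)"
    and decay: "\<forall>i\<in>{1,2}.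
      ((\<lambda>l. affine_field a b l (\<lambda>x y z t. phiP i x y z t l) x y z t) \<longlongrightarrow> 0) (at_inf_in UHP) \<and>
      ((\<lambda>l. affine_field a b l (\<lambda>x y z t. phiM i x y z t l) x y z t) \<longlongrightarrow> 0) (at_inf_in LHP)"
  shows "\<forall>i\<in>{1,2}.
      (\<forall>l\<in>UHP. affine_field a b l (\<lambda>x y z t. phiP i x y z t l) x y z t = 0) \<and>
      (\<forall>l\<in>LHP. affine_field a b l (\<lambda>x y z t. phiM i x y z t l) x y z t = 0)"
proof -
  define sP where "sP i l = affine_field a b l (\<lambda>x y z t. phiP i x y z t l) x y z t" for i l
  define sM where "sM i l = affine_field a b l (\<lambda>x y z t. phiM i x y z t l) x y z t" for i l
  have regular: "\<forall>i\<in>{1,2}. sP i holomorphic_on UHPo \<and> continuous_on UHP (sP i)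
      \<and> (sP i \<longlongrightarrow> 0) (at_inf_in UHP)
      \<and> sM i holomorphic_on LHPo \<and> continuous_on LHP (sM i)
      \<and> (sM i \<longlongrightarrow> 0) (at_inf_in LHP)"
    using phi_deriv_holo decay unfolding sP_def sM_def
    by (auto intro!: holomorphic_on_affine_field continuous_on_affine_field)
  have jump: "\<forall>i\<in>{1,2}. \<forall>r::real. sP i (complex_of_real r)
      = Jac R r (phiM 1 x y z t r) (phiM 2 x y z t r) i 1 * sM 1 (complex_of_real r)
      + Jac R r (phiM 1 x y z t r) (phiM 2 x y z t r) i 2 * sM 2 (complex_of_real r)"
  proof (intro ballI allI)
    fix i :: nat and r :: real
    assume "i \<in> {1, 2}"
    have "complex_of_real r \<in> LHP"
      by (simp add: LHP_def)
    then have "\<forall>i\<in>{1,2}. \<forall>k<4. along k (\<lambda>x y z t. phiM i x y z t (complex_of_real r)) x y z t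
        differentiable (at (coord k x y z t))"
      using phi_diff by blast
    from affine_field_jump[OF R_holo sol this \<open>i \<in> {1, 2}\<close>]
    show "sP i (complex_of_real r)
      = Jac R r (phiM 1 x y z t r) (phiM 2 x y z t r) i 1 * sM 1 (complex_of_real r)
      + Jac R r (phiM 1 x y z t r) (phiM 2 x y z t r) i 2 * sM 2 (complex_of_real r)"
      unfolding sP_def sM_def .
  qed
  have "\<forall>i\<in>{1,2}. (\<forall>l\<in>UHP. sP i l = 0) \<and> (\<forall>l\<in>LHP. sM i l = 0)"
    using lin_uniq regular jump by blast
  then show ?thesis
    unfolding sP_def sM_def .
qed

definition T_const :: "(real \<Rightarrow> real \<Rightarrow> real \<Rightarrow> real \<Rightarrow> complex) \<Rightarrow>
    real \<Rightarrow> real \<Rightarrow> real \<Rightarrow> real \<Rightarrow> nat \<Rightarrow> complex" where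
  "T_const u x y z t k = (if k = 0 then pd 0 (pd 1 u) x y z t
     else if k = 1 then - pd 0 (pd 0 u) x y z t else if k = 3 then 1 else 0)"

definition T_slope :: "nat \<Rightarrow> complex" where
  "T_slope k = (if k = 0 then -1 else 0)"

definition Z_const :: "(real \<Rightarrow> real \<Rightarrow> real \<Rightarrow> real \<Rightarrow> complex) \<Rightarrow>
    real \<Rightarrow> real \<Rightarrow> real \<Rightarrow> real \<Rightarrow> nat \<Rightarrow> complex" where
  "Z_const u x y z t k = (if k = 0 then - pd 2 (pd 1 u) x y z t
     else if k = 1 then pd 2 (pd 0 u) x y z t else 0)"

definition Z_slope :: "nat \<Rightarrow> complex" where
  "Z_slope k = (if k = 2 then 1 else 0)"

lemma Tfield_eq_affine_field: "Tfield u l f x y z t = affine_field (T_const u x y z t) T_slope l f x y z t"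
  by (simp add: Tfield_def affine_field_expand T_const_def T_slope_def algebra_simps)

lemma Zfield_eq_affine_field: "Zfield u l f x y z t = affine_field (Z_const u x y z t) Z_slope l f x y z t"
  by (simp add: Zfield_def affine_field_expand Z_const_def Z_slope_def algebra_simps)

lemma T_lead_cancel:
  assumes "i \<in> {1, 2}"
  shows "affine_field (T_const u x y z t) T_slope l (\<lambda>x y z t. lead i x y z t l) x y z t
      + (\<Sum>k<4. T_slope k * pd k (pd (i - 1) u) x y z t) = 0"
  using assms by (auto simp: affine_field_lead T_const_def T_slope_def eval_nat_numeral)

lemma Z_lead_cancel:
  assumes "i \<in> {1, 2}"
  shows "affine_field (Z_const u x y z t) Z_slope l (\<lambda>x y z t. lead i x y z t l) x y z t
      + (\<Sum>k<4. Z_slope k * pd k (pd (i - 1) u) x y z t) = 0"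
  using assms by (auto simp: affine_field_lead Z_const_def Z_slope_def eval_nat_numeral)

theorem proposition5p1:
  fixes R :: "nat \<Rightarrow> complex \<Rightarrow> complex \<Rightarrow> real \<Rightarrow> complex"
    and phiP phiM :: "nat \<Rightarrow> real \<Rightarrow> real \<Rightarrow> real \<Rightarrow> real \<Rightarrow> complex \<Rightarrow> complex"
    and u :: "real \<Rightarrow> real \<Rightarrow> real \<Rightarrow> real \<Rightarrow> complex"
  assumes R_holo: "\<forall>i\<in>{1,2}. \<forall>l z1 z2.
      ((\<lambda>w::complex \<times> complex. calR R i (fst w) (snd w) l) has_derivative
        (\<lambda>h. Jac R l z1 z2 i 1 * fst h + Jac R l z1 z2 i 2 * snd h)) (at (z1, z2))"
  and sol: "\<forall>x y z t. rh_solution R x y t (\<lambda>i. phiP i x y z t) (\<lambda>i. phiM i x y z t)"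
  and uniq: "\<forall>x y z t P M. rh_solution R x y t P M \<longrightarrow>
      (\<forall>i\<in>{1,2}. (\<forall>l\<in>UHP. P i l = phiP i x y z t l) \<and> (\<forall>l\<in>LHP. M i l = phiM i x y z t l))"
  and lin_uniq: "\<forall>x y z t. \<forall>sP sM :: nat \<Rightarrow> complex \<Rightarrow> complex.
      (\<forall>i\<in>{1,2}. sP i holomorphic_on UHPo \<and> continuous_on UHP (sP i)
               \<and> (sP i \<longlongrightarrow> 0) (at_inf_in UHP)
               \<and> sM i holomorphic_on LHPo \<and> continuous_on LHP (sM i)
               \<and> (sM i \<longlongrightarrow> 0) (at_inf_in LHP)) \<and>
      (\<forall>i\<in>{1,2}. \<forall>l::real.
         sP i (complex_of_real l) =
           Jac R l (phiM 1 x y z t l) (phiM 2 x y z t l) i 1 * sM 1 (complex_of_real l)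
         + Jac R l (phiM 1 x y z t l) (phiM 2 x y z t l) i 2 * sM 2 (complex_of_real l))
      \<longrightarrow> (\<forall>i\<in>{1,2}. (\<forall>l\<in>UHP. sP i l = 0) \<and> (\<forall>l\<in>LHP. sM i l = 0))"
  and phi_diff: "\<forall>i\<in>{1,2}. \<forall>k<4. \<forall>x y z t.
      (\<forall>l\<in>UHP. along k (\<lambda>x y z t. phiP i x y z t l) x y z t differentiable (at (coord k x y z t))) \<and>
      (\<forall>l\<in>LHP. along k (\<lambda>x y z t. phiM i x y z t l) x y z t differentiable (at (coord k x y z t)))"
  and phi_deriv_holo: "\<forall>i\<in>{1,2}. \<forall>k<4. \<forall>x y z t.
      (\<lambda>l. pd k (\<lambda>x y z t. phiP i x y z t l) x y z t) holomorphic_on UHPo \<and>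
      continuous_on UHP (\<lambda>l. pd k (\<lambda>x y z t. phiP i x y z t l) x y z t) \<and>
      (\<lambda>l. pd k (\<lambda>x y z t. phiM i x y z t l) x y z t) holomorphic_on LHPo \<and>
      continuous_on LHP (\<lambda>l. pd k (\<lambda>x y z t. phiM i x y z t l) x y z t)"
  and u_diff: "\<forall>x y z t. along 0 u x y z t differentiable (at x) \<and> along 1 u x y z t differentiable (at y)"
  and u_def: "\<forall>i\<in>{1,2}. \<forall>x y z t.
      ((\<lambda>l. l * (phiP i x y z t l - lead i x y z t l)) \<longlongrightarrow> pd (i - 1) u x y z t) (at_inf_in UHP) \<and>
      ((\<lambda>l. l * (phiM i x y z t l - lead i x y z t l)) \<longlongrightarrow> pd (i - 1) u x y z t) (at_inf_in LHP)"
  and termwise: "\<forall>i\<in>{1,2}. \<forall>k<4. \<forall>x y z t.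
      along k (pd (i - 1) u) x y z t differentiable (at (coord k x y z t)) \<and>
      ((\<lambda>l. l * pd k (\<lambda>x y z t. phiP i x y z t l - lead i x y z t l) x y z t)
          \<longlongrightarrow> pd k (pd (i - 1) u) x y z t) (at_inf_in UHP) \<and>
      ((\<lambda>l. l * pd k (\<lambda>x y z t. phiM i x y z t l - lead i x y z t l) x y z t)
          \<longlongrightarrow> pd k (pd (i - 1) u) x y z t) (at_inf_in LHP)"
  shows "\<forall>i\<in>{1,2}. \<forall>x y z t.
      (\<forall>l\<in>UHP. Tfield u l (\<lambda>x y z t. phiP i x y z t l) x y z t = 0 \<and>
               Zfield u l (\<lambda>x y z t. phiP i x y z t l) x y z t = 0) \<and>
      (\<forall>l\<in>LHP. Tfield u l (\<lambda>x y z t. phiM i x y z t l) x y z t = 0 \<and>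
               Zfield u l (\<lambda>x y z t. phiM i x y z t l) x y z t = 0)"
proof (intro ballI allI)
  fix i :: nat and x y z t :: real
  assume i: "i \<in> {1, 2}"
  have decay: "\<forall>j\<in>{1,2}.
      ((\<lambda>l. affine_field a b l (\<lambda>x y z t. phiP j x y z t l) x y z t) \<longlongrightarrow> 0) (at_inf_in UHP) \<and>
      ((\<lambda>l. affine_field a b l (\<lambda>x y z t. phiM j x y z t l) x y z t) \<longlongrightarrow> 0) (at_inf_in LHP)"
    if cancel: "\<And>j l. j \<in> {1, 2} \<Longrightarrow> affine_field a b l (\<lambda>x y z t. lead j x y z t l) x y z t
      + (\<Sum>k<4. b k * pd k (pd (j - 1) u) x y z t) = 0" for a b
  proof
    fix j :: nat
    assume j: "j \<in> {1, 2}"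
    show "((\<lambda>l. affine_field a b l (\<lambda>x y z t. phiP j x y z t l) x y z t) \<longlongrightarrow> 0) (at_inf_in UHP) \<and>
      ((\<lambda>l. affine_field a b l (\<lambda>x y z t. phiM j x y z t l) x y z t) \<longlongrightarrow> 0) (at_inf_in LHP)"
      by (intro conjI affine_field_tendsto_0[where i = j and L = "\<lambda>k. pd k (pd (j - 1) u) x y z t"])
        (use j phi_diff termwise cancel[OF j] in auto)
  qed
  note vanishes = affine_field_vanishes[OF R_holo sol lin_uniq phi_diff phi_deriv_holo decay]
  show "(\<forall>l\<in>UHP. Tfield u l (\<lambda>x y z t. phiP i x y z t l) x y z t = 0 \<and>
               Zfield u l (\<lambda>x y z t. phiP i x y z t l) x y z t = 0) \<and>
      (\<forall>l\<in>LHP. Tfield u l (\<lambda>x y z t. phiM i x y z t l) x y z t = 0 \<and>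
               Zfield u l (\<lambda>x y z t. phiM i x y z t l) x y z t = 0)"
    unfolding Tfield_eq_affine_field Zfield_eq_affine_field
    using vanishes[OF T_lead_cancel] vanishes[OF Z_lead_cancel] i by blast
qed

end
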